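(* In the setting where $W$ is a standard Brownian motion, $\kappa:[0,1]\to[0,1]$ with $\kappa(0)=0$, $\kappa(1)=1$ is H\"older continuous with some exponent $\tau>1/2$, $B(t)=W(t)-\kappa(t)W(1)$, $X(t)=\sum_{n=0}^\infty\alpha^nB(\{b^nt\})$ with $\alpha\in(0,1)$, $b\in\{2,3,\dots\}$ and $\alpha^2b<1$: there exist $\lambda>0$ and $M\in\mathbb N$ such that for all $n\ge M$ and all integers $b^{n-1}\le j<b^n$, $$\mathbb E\Big[\big(X((j+1)b^{-n})-X(jb^{-n})\big)\big(X((j+1)b^{-n}-b^{-1})-X(jb^{-n}-b^{-1})\big)\Big]\ge\lambda b^{-n}.$$
   Context: $\{x\}$ denotes the fractional part of $x\ge0$. *)

theory Defs
  imports "HOL-Probability.Probability"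
begin

definition std_brownian_motion :: "'a measure \<Rightarrow> (real \<Rightarrow> 'a \<Rightarrow> real) \<Rightarrow> bool" where
  "std_brownian_motion M W \<longleftrightarrow>
     prob_space M \<and>
     (\<forall>t\<ge>0. W t \<in> borel_measurable M) \<and>
     (\<forall>\<omega>\<in>space M. W 0 \<omega> = 0) \<and>
     (\<forall>\<omega>\<in>space M. continuous_on {0..} (\<lambda>t. W t \<omega>)) \<and>
     (\<forall>s t. 0 \<le> s \<and> s < t \<longrightarrow>
        distributed M lborel (\<lambda>\<omega>. W t \<omega> - W s \<omega>) (\<lambda>x. ennreal (normal_density 0 (sqrt (t - s)) x))) \<and>
     (\<forall>(n::nat) (ts::nat \<Rightarrow> real). 0 \<le> ts 0 \<and> (\<forall>i<n. ts i < ts (Suc i)) \<longrightarrow>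
        prob_space.indep_vars M (\<lambda>_. borel) (\<lambda>i \<omega>. W (ts (Suc i)) \<omega> - W (ts i) \<omega>) {..<n})"

definition holder_on01 :: "real \<Rightarrow> (real \<Rightarrow> real) \<Rightarrow> bool" where
  "holder_on01 tau f \<longleftrightarrow> (\<exists>C. \<forall>x\<in>{0..1}. \<forall>y\<in>{0..1}. \<bar>f x - f y\<bar> \<le> C * \<bar>x - y\<bar> powr tau)"

definition bridgeB :: "(real \<Rightarrow> real) \<Rightarrow> (real \<Rightarrow> 'a \<Rightarrow> real) \<Rightarrow> real \<Rightarrow> 'a \<Rightarrow> real" where
  "bridgeB \<kappa> W t \<omega> = W t \<omega> - \<kappa> t * W 1 \<omega>"

definition procX :: "real \<Rightarrow> nat \<Rightarrow> (real \<Rightarrow> real) \<Rightarrow> (real \<Rightarrow> 'a \<Rightarrow> real) \<Rightarrow> real \<Rightarrow> 'a \<Rightarrow> real" where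
  "procX \<alpha> b \<kappa> W t \<omega> = (\<Sum>n. \<alpha> ^ n * bridgeB \<kappa> W (frac (real b ^ n * t)) \<omega>)"

end

theory Submission
  imports Defs
begin

text \<open>
  At the grid points \<open>j/b^n\<close> only the first \<open>n\<close> terms of \<open>X\<close> survive, so an increment of
  \<open>X\<close> over a grid interval is a finite combination \<open>\<Sum>k<n. \<alpha>^k Y\<^sub>k\<close> of increments \<open>Y\<^sub>k\<close> of \<open>B\<close>
  over intervals of length \<open>b^(k-n)\<close>. Shifting time by \<open>1/b\<close> does not move the level-1 interval,
  so the two level-1 increments coincide and contribute \<open>\<alpha>^2 b^(1-n)\<close>, while all other Brownian
  overlaps are nonnegative. The \<open>\<kappa>\<close>-terms of the bridge covariance are controlled by Hoelder
  continuity and sum to \<open>O(n^2 \<rho>^(2n))\<close> for some \<open>\<rho>\<close> with \<open>\<rho>^2 b < 1\<close>, which exists because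
  \<open>\<tau> > 1/2\<close> and \<open>\<alpha>^2 b < 1\<close>. Hence the main term wins for large \<open>n\<close>.
\<close>

lemma normal_distributed_moments:
  assumes "prob_space M" and \<sigma>: "0 < \<sigma>"
    and D: "distributed M lborel X (\<lambda>x. ennreal (normal_density 0 \<sigma> x))"
  shows "integrable M X" "integrable M (\<lambda>\<omega>. (X \<omega>)\<^sup>2)"
    "(\<integral>\<omega>. X \<omega> \<partial>M) = 0" "(\<integral>\<omega>. (X \<omega>)\<^sup>2 \<partial>M) = \<sigma>\<^sup>2"
proof -
  interpret prob_space M by fact
  show "integrable M X"
    using distributed_integrable[OF D, of "\<lambda>x. x"] integrable_normal_moment_nz_1[OF \<sigma>, of 0]
    by simp
  have "integrable lborel (\<lambda>x. normal_density 0 \<sigma> x * x\<^sup>2)"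
    using integrable_normal_moment[OF \<sigma>, of 0 2] by simp
  then show "integrable M (\<lambda>\<omega>. (X \<omega>)\<^sup>2)"
    using distributed_integrable[OF D, of "\<lambda>x. x\<^sup>2"] by simp
  show E: "(\<integral>\<omega>. X \<omega> \<partial>M) = 0"
    using normal_distributed_expectation[OF \<sigma> D] by simp
  show "(\<integral>\<omega>. (X \<omega>)\<^sup>2 \<partial>M) = \<sigma>\<^sup>2"
    using normal_distributed_variance[OF \<sigma> D] E by simp
qed

text \<open>The covariance of \<open>B(p) - B(q)\<close> and \<open>B(p') - B(q')\<close>, obtained from \<open>E[W(s) W(t)] = min s t\<close>;
  it uses \<open>min t 1 = t\<close>, so it is only correct for arguments in \<open>[0,1]\<close>.\<close>
definition bridge_increment_cov :: "(real \<Rightarrow> real) \<Rightarrow> real \<Rightarrow> real \<Rightarrow> real \<Rightarrow> real \<Rightarrow> real" where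
  "bridge_increment_cov \<kappa> p q p' q' =
    (min p p' - min p q' - min q p' + min q q') - (\<kappa> p' - \<kappa> q') * (p - q)
    - (\<kappa> p - \<kappa> q) * (p' - q') + (\<kappa> p - \<kappa> q) * (\<kappa> p' - \<kappa> q')"

context
  fixes M :: "'a measure" and W :: "real \<Rightarrow> 'a \<Rightarrow> real"
  assumes BM: "std_brownian_motion M W"
begin

lemma brownian_prob_space: "prob_space M"
  using BM unfolding std_brownian_motion_def by blast

lemma brownian_at_zero: "\<omega> \<in> space M \<Longrightarrow> W 0 \<omega> = 0"
  using BM unfolding std_brownian_motion_def by blast

lemma brownian_indep_increments:
  "0 \<le> ts 0 \<Longrightarrow> (\<forall>i<n. ts i < ts (Suc i)) \<Longrightarrow>
    prob_space.indep_vars M (\<lambda>_. borel) (\<lambda>i \<omega>. W (ts (Suc i)) \<omega> - W (ts i) \<omega>) {..<n}"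
  using BM unfolding std_brownian_motion_def by blast

lemma brownian_increment_moments:
  assumes "0 \<le> s" "s < t"
  shows "integrable M (\<lambda>\<omega>. W t \<omega> - W s \<omega>)"
    "integrable M (\<lambda>\<omega>. (W t \<omega> - W s \<omega>)\<^sup>2)"
    "(\<integral>\<omega>. W t \<omega> - W s \<omega> \<partial>M) = 0"
    "(\<integral>\<omega>. (W t \<omega> - W s \<omega>)\<^sup>2 \<partial>M) = t - s"
proof -
  have D: "distributed M lborel (\<lambda>\<omega>. W t \<omega> - W s \<omega>)
      (\<lambda>x. ennreal (normal_density 0 (sqrt (t - s)) x))"
    using BM assms unfolding std_brownian_motion_def by blast
  have "0 < sqrt (t - s)" using assms by simp
  note moments = normal_distributed_moments[OF brownian_prob_space this D]
  show "integrable M (\<lambda>\<omega>. W t \<omega> - W s \<omega>)" "integrable M (\<lambda>\<omega>. (W t \<omega> - W s \<omega>)\<^sup>2)"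
    "(\<integral>\<omega>. W t \<omega> - W s \<omega> \<partial>M) = 0"
    using moments by simp_all
  show "(\<integral>\<omega>. (W t \<omega> - W s \<omega>)\<^sup>2 \<partial>M) = t - s"
    using moments(4) assms by simp
qed

lemma brownian_increments_indep:
  assumes "0 \<le> r" "r < s" "s < t"
  shows "prob_space.indep_var M borel (\<lambda>\<omega>. W s \<omega> - W r \<omega>) borel (\<lambda>\<omega>. W t \<omega> - W s \<omega>)"
proof -
  interpret prob_space M by (rule brownian_prob_space)
  define ts :: "nat \<Rightarrow> real" where "ts i = (if i = 0 then r else if i = 1 then s else t)" for i
  define X where "X = (\<lambda>i \<omega>. W (ts (Suc i)) \<omega> - W (ts i) \<omega>)"
  have "indep_vars (\<lambda>_. borel) X {..<2}"
    using brownian_indep_increments[of ts 2] assms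
    unfolding X_def by (auto simp: ts_def less_Suc_eq numeral_2_eq_2)
  moreover have "{..<2::nat} = insert 0 {1}" by auto
  ultimately have "indep_var borel (X 0) borel (\<lambda>\<omega>. \<Sum>i\<in>{1}. X i \<omega>)"
    by (intro indep_vars_sum) auto
  then show ?thesis by (simp add: X_def ts_def)
qed

lemma brownian_cov_le:
  assumes "0 \<le> s" "s \<le> t"
  shows "integrable M (\<lambda>\<omega>. W s \<omega> * W t \<omega>) \<and> (\<integral>\<omega>. W s \<omega> * W t \<omega> \<partial>M) = s"
proof -
  interpret prob_space M by (rule brownian_prob_space)
  define A where "A = (\<lambda>\<omega>. (W s \<omega> - W 0 \<omega>)\<^sup>2)"
  define C where "C = (\<lambda>\<omega>. (W s \<omega> - W 0 \<omega>) * (W t \<omega> - W s \<omega>))"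
  have A: "integrable M A \<and> integral\<^sup>L M A = s"
    using brownian_increment_moments[of 0 s] assms by (cases "s = 0") (auto simp: A_def)
  have C: "integrable M C \<and> integral\<^sup>L M C = 0"
  proof (cases "s = 0 \<or> s = t")
    case False
    with assms have "0 < s" "s < t" by auto
    note m1 = brownian_increment_moments[OF order_refl \<open>0 < s\<close>]
      and m2 = brownian_increment_moments[OF _ \<open>s < t\<close>]
    have ind: "indep_var borel (\<lambda>\<omega>. W s \<omega> - W 0 \<omega>) borel (\<lambda>\<omega>. W t \<omega> - W s \<omega>)"
      using brownian_increments_indep[OF order_refl \<open>0 < s\<close> \<open>s < t\<close>] .
    show ?thesis
      using indep_var_integrable[OF ind m1(1) m2(1)] indep_var_lebesgue_integral[OF ind m1(1) m2(1)]
        m2(3) assms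
      unfolding C_def by simp
  qed (auto simp: C_def)
  have eq: "W s \<omega> * W t \<omega> = A \<omega> + C \<omega>" if "\<omega> \<in> space M" for \<omega>
    using brownian_at_zero[OF that] by (simp add: A_def C_def power2_eq_square algebra_simps)
  have "integrable M (\<lambda>\<omega>. W s \<omega> * W t \<omega>) \<longleftrightarrow> integrable M (\<lambda>\<omega>. A \<omega> + C \<omega>)"
    by (rule Bochner_Integration.integrable_cong) (simp_all add: eq)
  moreover have "(\<integral>\<omega>. W s \<omega> * W t \<omega> \<partial>M) = (\<integral>\<omega>. A \<omega> + C \<omega> \<partial>M)"
    by (rule Bochner_Integration.integral_cong) (simp_all add: eq)
  ultimately show ?thesis
    using A C by simp
qed

lemma brownian_cov:
  assumes "0 \<le> s" "0 \<le> t"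
  shows "integrable M (\<lambda>\<omega>. W s \<omega> * W t \<omega>) \<and> (\<integral>\<omega>. W s \<omega> * W t \<omega> \<partial>M) = min s t"
proof (cases "s \<le> t")
  case True
  then show ?thesis using brownian_cov_le[of s t] assms by simp
next
  case False
  then show ?thesis using brownian_cov_le[of t s] assms by (simp add: mult.commute)
qed

lemma brownian_lincomb_cov:
  assumes "finite I" "finite J"
    and s: "\<And>i. i \<in> I \<Longrightarrow> 0 \<le> s i" and t: "\<And>j. j \<in> J \<Longrightarrow> 0 \<le> t j"
  shows "integrable M (\<lambda>\<omega>. (\<Sum>i\<in>I. a i * W (s i) \<omega>) * (\<Sum>j\<in>J. c j * W (t j) \<omega>)) \<and>
    (\<integral>\<omega>. (\<Sum>i\<in>I. a i * W (s i) \<omega>) * (\<Sum>j\<in>J. c j * W (t j) \<omega>) \<partial>M) =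
    (\<Sum>i\<in>I. \<Sum>j\<in>J. a i * c j * min (s i) (t j))"
proof -
  have expand: "(\<lambda>\<omega>. (\<Sum>i\<in>I. a i * W (s i) \<omega>) * (\<Sum>j\<in>J. c j * W (t j) \<omega>)) =
     (\<lambda>\<omega>. \<Sum>i\<in>I. \<Sum>j\<in>J. a i * c j * (W (s i) \<omega> * W (t j) \<omega>))"
    by (simp add: sum_product mult_ac)
  have cov: "integrable M (\<lambda>\<omega>. W (s i) \<omega> * W (t j) \<omega>)"
    "(\<integral>\<omega>. W (s i) \<omega> * W (t j) \<omega> \<partial>M) = min (s i) (t j)" if "i \<in> I" "j \<in> J" for i j
    using brownian_cov[OF s[OF that(1)] t[OF that(2)]] by simp_all
  show ?thesis
    unfolding expand using assms cov
    by (simp add: integral_sum Bochner_Integration.integrable_sum)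
qed

lemma bridgeB_increment_cov:
  fixes \<kappa> :: "real \<Rightarrow> real"
  assumes "p \<in> {0..1}" "q \<in> {0..1}" "p' \<in> {0..1}" "q' \<in> {0..1}"
  shows "integrable M (\<lambda>\<omega>. (bridgeB \<kappa> W p \<omega> - bridgeB \<kappa> W q \<omega>) * (bridgeB \<kappa> W p' \<omega> - bridgeB \<kappa> W q' \<omega>)) \<and>
    (\<integral>\<omega>. (bridgeB \<kappa> W p \<omega> - bridgeB \<kappa> W q \<omega>) * (bridgeB \<kappa> W p' \<omega> - bridgeB \<kappa> W q' \<omega>) \<partial>M) =
    bridge_increment_cov \<kappa> p q p' q'"
proof -
  define a :: "nat \<Rightarrow> real" where "a i = (if i = 0 then 1 else if i = 1 then -1 else \<kappa> q - \<kappa> p)" for i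
  define s :: "nat \<Rightarrow> real" where "s i = (if i = 0 then p else if i = 1 then q else 1)" for i
  define c :: "nat \<Rightarrow> real" where "c i = (if i = 0 then 1 else if i = 1 then -1 else \<kappa> q' - \<kappa> p')" for i
  define t :: "nat \<Rightarrow> real" where "t i = (if i = 0 then p' else if i = 1 then q' else 1)" for i
  have lincomb: "bridgeB \<kappa> W p \<omega> - bridgeB \<kappa> W q \<omega> = (\<Sum>i\<in>{0,1,2}. a i * W (s i) \<omega>)"
    "bridgeB \<kappa> W p' \<omega> - bridgeB \<kappa> W q' \<omega> = (\<Sum>i\<in>{0,1,2}. c i * W (t i) \<omega>)" for \<omega>
    by (simp_all add: a_def s_def c_def t_def bridgeB_def algebra_simps)
  have cov: "(\<Sum>i\<in>{0,1,2::nat}. \<Sum>j\<in>{0,1,2::nat}. a i * c j * min (s i) (t j)) =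
      bridge_increment_cov \<kappa> p q p' q'"
    using assms
    by (simp add: a_def s_def c_def t_def bridge_increment_cov_def algebra_simps)
  show ?thesis
    unfolding lincomb cov[symmetric]
    by (rule brownian_lincomb_cov) (use assms in \<open>auto simp: s_def t_def\<close>)
qed

lemma bridgeB_lincomb_increment_cov:
  fixes \<kappa> :: "real \<Rightarrow> real"
  assumes "finite I" "finite J"
    and I: "\<And>i. i \<in> I \<Longrightarrow> p i \<in> {0..1} \<and> q i \<in> {0..1}"
    and J: "\<And>j. j \<in> J \<Longrightarrow> p' j \<in> {0..1} \<and> q' j \<in> {0..1}"
  shows "(\<integral>\<omega>. (\<Sum>i\<in>I. a i * (bridgeB \<kappa> W (p i) \<omega> - bridgeB \<kappa> W (q i) \<omega>))
        * (\<Sum>j\<in>J. c j * (bridgeB \<kappa> W (p' j) \<omega> - bridgeB \<kappa> W (q' j) \<omega>)) \<partial>M)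
    = (\<Sum>i\<in>I. \<Sum>j\<in>J. a i * c j * bridge_increment_cov \<kappa> (p i) (q i) (p' j) (q' j))"
proof -
  define Y where "Y i \<omega> = bridgeB \<kappa> W (p i) \<omega> - bridgeB \<kappa> W (q i) \<omega>" for i \<omega>
  define Y' where "Y' j \<omega> = bridgeB \<kappa> W (p' j) \<omega> - bridgeB \<kappa> W (q' j) \<omega>" for j \<omega>
  have cov: "integrable M (\<lambda>\<omega>. Y i \<omega> * Y' j \<omega>)"
    "(\<integral>\<omega>. Y i \<omega> * Y' j \<omega> \<partial>M) = bridge_increment_cov \<kappa> (p i) (q i) (p' j) (q' j)"
    if "i \<in> I" "j \<in> J" for i j
    using bridgeB_increment_cov[of "p i" "q i" "p' j" "q' j" \<kappa>] I[OF that(1)] J[OF that(2)]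
    unfolding Y_def Y'_def by simp_all
  have "(\<lambda>\<omega>. (\<Sum>i\<in>I. a i * Y i \<omega>) * (\<Sum>j\<in>J. c j * Y' j \<omega>)) =
     (\<lambda>\<omega>. \<Sum>i\<in>I. \<Sum>j\<in>J. a i * c j * (Y i \<omega> * Y' j \<omega>))"
    by (simp add: sum_product mult_ac)
  then show ?thesis
    unfolding Y_def[symmetric] Y'_def[symmetric] using assms cov
    by (simp add: integral_sum Bochner_Integration.integrable_sum)
qed

end

definition residue_frac :: "nat \<Rightarrow> nat \<Rightarrow> real" where
  "residue_frac N m = real (m mod N) / real N"

lemma frac_of_nat_div:
  assumes "0 < N"
  shows "frac (real m / real N) = residue_frac N m"
proof -
  have "real m = real N * real (m div N) + real (m mod N)"
    by (metis of_nat_add of_nat_mult div_mult_mod_eq mult.commute)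
  then have "real m / real N = real (m div N) + residue_frac N m"
    using assms by (simp add: residue_frac_def field_simps)
  moreover have "0 \<le> residue_frac N m" "residue_frac N m < 1"
    using assms by (auto simp: residue_frac_def field_simps)
  ultimately show ?thesis
    unfolding frac_unique_iff by simp
qed

lemma residue_frac_nonneg: "0 \<le> residue_frac N m"
  by (simp add: residue_frac_def)

lemma residue_frac_add_le:
  assumes "0 < N"
  shows "residue_frac N m + 1 / real N \<le> 1"
proof -
  have "real (m mod N) + 1 \<le> real N"
    using mod_less_divisor[OF assms, of m] by linarith
  then show ?thesis
    using assms by (simp add: residue_frac_def add_divide_distrib[symmetric])
qed

lemma residue_frac_interval:
  assumes "0 < b"
  shows "0 \<le> residue_frac (b ^ i) m \<and> residue_frac (b ^ i) m + 1 / real b ^ i \<le> 1"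
  using residue_frac_nonneg residue_frac_add_le[of "b ^ i" m] assms by simp

lemma residue_frac_Suc:
  assumes "0 < N" and "f 0 = f 1"
  shows "f (residue_frac N (Suc m)) = f (residue_frac N m + 1 / real N)"
proof (cases "Suc (m mod N) = N")
  case True
  then have "real (m mod N) + 1 = real N"
    by (metis of_nat_Suc add.commute)
  then have "residue_frac N m + 1 / real N = 1"
    using assms by (simp add: residue_frac_def add_divide_distrib[symmetric])
  moreover have "Suc m mod N = 0" using True by (simp add: mod_Suc)
  ultimately show ?thesis using assms by (simp add: residue_frac_def)
next
  case False
  then have "Suc m mod N = Suc (m mod N)" by (simp add: mod_Suc)
  then show ?thesis by (simp add: residue_frac_def add_divide_distrib add.commute)
qed

text \<open>Terms with \<open>k \<ge> n\<close> vanish because \<open>b\<^sup>k m / b\<^sup>n\<close> is an integer and \<open>B(0) = 0\<close>.\<close>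
lemma procX_grid:
  assumes b: "1 \<le> b" and B0: "bridgeB \<kappa> W 0 \<omega> = 0"
  shows "procX \<alpha> b \<kappa> W (real m / real b ^ n) \<omega> =
    (\<Sum>k<n. \<alpha> ^ k * bridgeB \<kappa> W (residue_frac (b ^ (n - k)) m) \<omega>)"
proof -
  have vanish: "\<alpha> ^ k * bridgeB \<kappa> W (frac (real b ^ k * (real m / real b ^ n))) \<omega> = 0"
    if "k \<notin> {..<n}" for k
  proof -
    from that obtain d where "k = n + d" by (metis le_add_diff_inverse not_less lessThan_iff)
    then have "real b ^ k * (real m / real b ^ n) = real (m * b ^ d)"
      using b by (simp add: power_add field_simps)
    then have "frac (real b ^ k * (real m / real b ^ n)) = 0"
      unfolding frac_eq_0_iff by (simp only: Ints_of_nat)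
    then show ?thesis by (simp only: B0 mult_zero_right)
  qed
  have "procX \<alpha> b \<kappa> W (real m / real b ^ n) \<omega> =
     (\<Sum>k<n. \<alpha> ^ k * bridgeB \<kappa> W (frac (real b ^ k * (real m / real b ^ n))) \<omega>)"
    unfolding procX_def by (rule suminf_finite) (use vanish in auto)
  also have "\<dots> = (\<Sum>k<n. \<alpha> ^ k * bridgeB \<kappa> W (residue_frac (b ^ (n - k)) m) \<omega>)"
  proof (intro sum.cong refl)
    fix k assume "k \<in> {..<n}"
    then obtain d where "n = k + d" using less_imp_add_positive by blast
    then have "real b ^ k * (real m / real b ^ n) = real m / real (b ^ (n - k))"
      using b by (simp add: power_add)
    then show "\<alpha> ^ k * bridgeB \<kappa> W (frac (real b ^ k * (real m / real b ^ n))) \<omega> =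
       \<alpha> ^ k * bridgeB \<kappa> W (residue_frac (b ^ (n - k)) m) \<omega>"
      using frac_of_nat_div[of "b ^ (n - k)" m] b by simp
  qed
  finally show ?thesis .
qed

lemma procX_grid_increment:
  assumes b: "1 \<le> b" and B0: "bridgeB \<kappa> W 0 \<omega> = 0" and B1: "bridgeB \<kappa> W 1 \<omega> = 0"
  shows "procX \<alpha> b \<kappa> W ((real m + 1) / real b ^ n) \<omega> - procX \<alpha> b \<kappa> W (real m / real b ^ n) \<omega> =
    (\<Sum>k<n. \<alpha> ^ k * (bridgeB \<kappa> W (residue_frac (b ^ (n - k)) m + 1 / real b ^ (n - k)) \<omega>
      - bridgeB \<kappa> W (residue_frac (b ^ (n - k)) m) \<omega>))"
proof -
  have "real m + 1 = real (Suc m)" by simp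
  then have "procX \<alpha> b \<kappa> W ((real m + 1) / real b ^ n) \<omega> - procX \<alpha> b \<kappa> W (real m / real b ^ n) \<omega> =
    (\<Sum>k<n. \<alpha> ^ k * (bridgeB \<kappa> W (residue_frac (b ^ (n - k)) (Suc m)) \<omega>
      - bridgeB \<kappa> W (residue_frac (b ^ (n - k)) m) \<omega>))"
    by (simp only: procX_grid[OF b B0] sum_subtractf[symmetric] right_diff_distrib)
  also have "\<dots> = (\<Sum>k<n. \<alpha> ^ k * (bridgeB \<kappa> W (residue_frac (b ^ (n - k)) m + 1 / real b ^ (n - k)) \<omega>
      - bridgeB \<kappa> W (residue_frac (b ^ (n - k)) m) \<omega>))"
    using residue_frac_Suc[of "b ^ (n - k)" "\<lambda>t. bridgeB \<kappa> W t \<omega>" m for k] b B0 B1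
    by simp
  finally show ?thesis .
qed

lemma procX_grid_increment_cov:
  fixes M :: "'a measure" and W :: "real \<Rightarrow> 'a \<Rightarrow> real"
  assumes BM: "std_brownian_motion M W" and b: "1 \<le> b" and "\<kappa> 0 = 0" "\<kappa> 1 = 1"
  shows "(\<integral>\<omega>. (procX \<alpha> b \<kappa> W ((real m + 1) / real b ^ n) \<omega> - procX \<alpha> b \<kappa> W (real m / real b ^ n) \<omega>)
        * (procX \<alpha> b \<kappa> W ((real m' + 1) / real b ^ n) \<omega> - procX \<alpha> b \<kappa> W (real m' / real b ^ n) \<omega>) \<partial>M)
    = (\<Sum>k<n. \<Sum>l<n. \<alpha> ^ k * \<alpha> ^ l * bridge_increment_cov \<kappa>
        (residue_frac (b ^ (n - k)) m + 1 / real b ^ (n - k)) (residue_frac (b ^ (n - k)) m)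
        (residue_frac (b ^ (n - l)) m' + 1 / real b ^ (n - l)) (residue_frac (b ^ (n - l)) m'))"
    (is "?lhs = ?rhs")
proof -
  have B0: "bridgeB \<kappa> W 0 \<omega> = 0" if "\<omega> \<in> space M" for \<omega>
    using brownian_at_zero[OF BM that] assms by (simp add: bridgeB_def)
  have B1: "bridgeB \<kappa> W 1 \<omega> = 0" for \<omega>
    using assms by (simp add: bridgeB_def)
  have "residue_frac (b ^ i) r \<in> {0..1} \<and> residue_frac (b ^ i) r + 1 / real b ^ i \<in> {0..1}"
    for i r
  proof -
    have "0 \<le> 1 / real b ^ i" by simp
    moreover note residue_frac_interval[of b i r]
    ultimately have "residue_frac (b ^ i) r \<le> 1" using b by linarith
    then show ?thesis using residue_frac_interval[of b i r] b by simp
  qed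
  then have "(\<integral>\<omega>. (\<Sum>k<n. \<alpha> ^ k * (bridgeB \<kappa> W (residue_frac (b ^ (n - k)) m + 1 / real b ^ (n - k)) \<omega>
          - bridgeB \<kappa> W (residue_frac (b ^ (n - k)) m) \<omega>))
        * (\<Sum>l<n. \<alpha> ^ l * (bridgeB \<kappa> W (residue_frac (b ^ (n - l)) m' + 1 / real b ^ (n - l)) \<omega>
          - bridgeB \<kappa> W (residue_frac (b ^ (n - l)) m') \<omega>)) \<partial>M) = ?rhs"
    by (intro bridgeB_lincomb_increment_cov[OF BM]) auto
  moreover have "?lhs = (\<integral>\<omega>. (\<Sum>k<n. \<alpha> ^ k * (bridgeB \<kappa> W (residue_frac (b ^ (n - k)) m + 1 / real b ^ (n - k)) \<omega>
          - bridgeB \<kappa> W (residue_frac (b ^ (n - k)) m) \<omega>))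
        * (\<Sum>l<n. \<alpha> ^ l * (bridgeB \<kappa> W (residue_frac (b ^ (n - l)) m' + 1 / real b ^ (n - l)) \<omega>
          - bridgeB \<kappa> W (residue_frac (b ^ (n - l)) m') \<omega>)) \<partial>M)"
    by (intro Bochner_Integration.integral_cong refl)
      (simp only: procX_grid_increment[OF b B0 B1])
  ultimately show ?thesis by simp
qed

lemma min_overlap_nonneg:
  fixes a a' c c' :: real
  assumes "a \<le> a'" "c \<le> c'"
  shows "0 \<le> min a' c' - min a' c - min a c' + min a c"
  using assms by (simp add: min_def)

lemma weighted_double_sum_ge:
  fixes w h d d' E :: "nat \<Rightarrow> real" and ov :: "nat \<Rightarrow> nat \<Rightarrow> real"
  assumes "1 < n" and w: "\<And>k. 0 \<le> w k" and ov: "\<And>k l. 0 \<le> ov k l" and "ov 1 1 = h 1"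
    and h: "\<And>k. 0 \<le> h k" and d: "\<And>k. \<bar>d k\<bar> \<le> E k" and d': "\<And>k. \<bar>d' k\<bar> \<le> E k"
  shows "(w 1)\<^sup>2 * h 1 - 2 * (\<Sum>k<n. w k * E k) * (\<Sum>k<n. w k * h k) - (\<Sum>k<n. w k * E k)\<^sup>2
    \<le> (\<Sum>k<n. \<Sum>l<n. w k * w l * (ov k l - d' l * h k - d k * h l + d k * d' l))"
proof -
  define SE where "SE = (\<Sum>k<n. w k * E k)"
  define SH where "SH = (\<Sum>k<n. w k * h k)"
  define D where "D = (\<Sum>k<n. w k * d k)"
  define D' where "D' = (\<Sum>k<n. w k * d' k)"
  have "(\<Sum>k<n. \<Sum>l<n. w k * w l * (ov k l - d' l * h k - d k * h l + d k * d' l))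
      = (\<Sum>k<n. \<Sum>l<n. w k * w l * ov k l - (w k * h k) * (w l * d' l)
          - (w k * d k) * (w l * h l) + (w k * d k) * (w l * d' l))"
    by (simp add: algebra_simps)
  also have "\<dots> = (\<Sum>k<n. \<Sum>l<n. w k * w l * ov k l) - SH * D' - D * SH + D * D'"
    by (simp add: sum.distrib sum_subtractf SH_def D_def D'_def sum_product)
  finally have expand: "(\<Sum>k<n. \<Sum>l<n. w k * w l * (ov k l - d' l * h k - d k * h l + d k * d' l))
      = (\<Sum>k<n. \<Sum>l<n. w k * w l * ov k l) - SH * D' - D * SH + D * D'" .
  have "(w 1)\<^sup>2 * h 1 = w 1 * w 1 * ov 1 1"
    using \<open>ov 1 1 = h 1\<close> by (simp add: power2_eq_square)
  also have "\<dots> \<le> (\<Sum>l<n. w 1 * w l * ov 1 l)"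
    by (rule member_le_sum) (use assms in auto)
  also have "\<dots> \<le> (\<Sum>k<n. \<Sum>l<n. w k * w l * ov k l)"
    by (rule member_le_sum) (use assms in \<open>auto intro!: sum_nonneg\<close>)
  finally have diagonal: "(w 1)\<^sup>2 * h 1 \<le> (\<Sum>k<n. \<Sum>l<n. w k * w l * ov k l)" .
  have weighted_le: "\<bar>\<Sum>k<n. w k * f k\<bar> \<le> SE" if "\<And>k. \<bar>f k\<bar> \<le> E k" for f
    unfolding SE_def
    by (rule order_trans[OF sum_abs]) (use w that in \<open>auto intro!: sum_mono simp: abs_mult mult_left_mono\<close>)
  have "\<bar>D\<bar> \<le> SE" "\<bar>D'\<bar> \<le> SE"
    unfolding D_def D'_def using weighted_le d d' by auto
  moreover have "0 \<le> SH" unfolding SH_def using w h by (auto intro!: sum_nonneg)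
  ultimately have "SH * D' \<le> SH * SE" "D * SH \<le> SE * SH" "\<bar>D * D'\<bar> \<le> SE * SE"
    by (auto intro!: mult_left_mono mult_right_mono mult_mono simp: abs_mult abs_le_iff)
  then show ?thesis
    unfolding expand SE_def[symmetric] SH_def[symmetric] using diagonal
    by (simp add: power2_eq_square abs_le_iff algebra_simps)
qed

lemma sum_power_mult_power_diff_le:
  fixes \<alpha> x \<rho> :: real
  assumes "0 \<le> \<alpha>" "\<alpha> \<le> \<rho>" "0 \<le> x" "x \<le> \<rho>"
  shows "(\<Sum>k<n. \<alpha> ^ k * x ^ (n - k)) \<le> real n * \<rho> ^ n"
proof -
  have "\<alpha> ^ k * x ^ (n - k) \<le> \<rho> ^ n" if "k < n" for k
  proof -
    have "\<alpha> ^ k * x ^ (n - k) \<le> \<rho> ^ k * \<rho> ^ (n - k)"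
      using assms by (intro mult_mono power_mono) auto
    also have "\<dots> = \<rho> ^ n" using that by (simp flip: power_add)
    finally show ?thesis .
  qed
  then have "(\<Sum>k<n. \<alpha> ^ k * x ^ (n - k)) \<le> (\<Sum>k<n. \<rho> ^ n)"
    by (intro sum_mono) auto
  then show ?thesis by simp
qed

lemma one_over_power_powr:
  fixes x t :: real
  assumes "0 < x"
  shows "(1 / x ^ m) powr t = (1 / x powr t) ^ m"
  using assms by (simp add: powr_divide powr_power powr_realpow[symmetric] powr_powr
      power_one_over mult.commute flip: powr_realpow)

lemma error_sums_le:
  fixes C \<tau> \<alpha> \<rho> :: real and b n :: nat
  assumes \<alpha>: "0 < \<alpha>" "\<alpha> \<le> \<rho>" and \<rho>: "1 / real b powr \<tau> \<le> \<rho>" "1 / real b \<le> \<rho>"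
    and C: "0 \<le> C" and b: "0 < b"
  shows "2 * (\<Sum>k<n. \<alpha> ^ k * (C * (1 / real b powr \<tau>) ^ (n - k))) * (\<Sum>k<n. \<alpha> ^ k * (1 / real b ^ (n - k)))
      + (\<Sum>k<n. \<alpha> ^ k * (C * (1 / real b powr \<tau>) ^ (n - k)))\<^sup>2
    \<le> (2 * C + C\<^sup>2) * (real n ^ 2 * (\<rho>\<^sup>2 * real b) ^ n) / real b ^ n"
proof -
  define SE where "SE = (\<Sum>k<n. \<alpha> ^ k * (C * (1 / real b powr \<tau>) ^ (n - k)))"
  define SH where "SH = (\<Sum>k<n. \<alpha> ^ k * (1 / real b ^ (n - k)))"
  have "SE \<le> C * (real n * \<rho> ^ n)"
    unfolding SE_def using C \<alpha> \<rho>
    by (simp add: mult.left_commute sum_distrib_left[symmetric] mult_left_mono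
        sum_power_mult_power_diff_le)
  moreover have "SH \<le> real n * \<rho> ^ n"
    unfolding SH_def using \<alpha> \<rho>
    by (simp add: power_one_over[symmetric] sum_power_mult_power_diff_le)
  moreover have "0 \<le> SE" "0 \<le> SH"
    unfolding SE_def SH_def using \<alpha> C by (auto intro!: sum_nonneg)
  ultimately have "2 * SE * SH + SE\<^sup>2 \<le> 2 * (C * (real n * \<rho> ^ n)) * (real n * \<rho> ^ n)
      + (C * (real n * \<rho> ^ n))\<^sup>2"
    by (intro add_mono mult_mono power_mono) auto
  also have "\<dots> = (2 * C + C\<^sup>2) * (real n ^ 2 * (\<rho>\<^sup>2 * real b) ^ n) / real b ^ n"
    using b by (simp add: power_mult_distrib power2_eq_square field_simps)
  finally show ?thesis unfolding SE_def SH_def .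
qed

lemma bridge_cov_double_sum_ge:
  fixes \<kappa> :: "real \<Rightarrow> real" and q q' :: "nat \<Rightarrow> real" and C \<tau> \<alpha> \<rho> :: real and b n :: nat
  assumes n: "2 \<le> n" and b: "2 \<le> b" and \<alpha>: "0 < \<alpha>" "\<alpha> \<le> \<rho>"
    and \<rho>: "1 / real b powr \<tau> \<le> \<rho>" "1 / real b \<le> \<rho>"
    and C: "0 \<le> C"
    and hol: "\<And>x y. x \<in> {0..1} \<Longrightarrow> y \<in> {0..1} \<Longrightarrow> \<bar>\<kappa> x - \<kappa> y\<bar> \<le> C * \<bar>x - y\<bar> powr \<tau>"
    and q: "\<And>k. 0 \<le> q k \<and> q k + 1 / real b ^ (n - k) \<le> 1"
    and q': "\<And>k. 0 \<le> q' k \<and> q' k + 1 / real b ^ (n - k) \<le> 1"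
    and q1: "q 1 = q' 1"
  shows "(\<alpha>\<^sup>2 * real b - (2 * C + C\<^sup>2) * (real n ^ 2 * (\<rho>\<^sup>2 * real b) ^ n)) / real b ^ n
    \<le> (\<Sum>k<n. \<Sum>l<n. \<alpha> ^ k * \<alpha> ^ l * bridge_increment_cov \<kappa>
        (q k + 1 / real b ^ (n - k)) (q k) (q' l + 1 / real b ^ (n - l)) (q' l))"
proof -
  define h where "h k = 1 / real b ^ (n - k)" for k
  define d where "d k = \<kappa> (q k + h k) - \<kappa> (q k)" for k
  define d' where "d' k = \<kappa> (q' k + h k) - \<kappa> (q' k)" for k
  define ov where "ov k l = min (q k + h k) (q' l + h l) - min (q k + h k) (q' l)
      - min (q k) (q' l + h l) + min (q k) (q' l)" for k l
  define E where "E k = C * (1 / real b powr \<tau>) ^ (n - k)" for k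
  define SE where "SE = (\<Sum>k<n. \<alpha> ^ k * E k)"
  define SH where "SH = (\<Sum>k<n. \<alpha> ^ k * h k)"
  have h0: "0 \<le> h k" for k by (simp add: h_def)
  have "\<bar>d k\<bar> \<le> E k" "\<bar>d' k\<bar> \<le> E k" for k
  proof -
    have "h k powr \<tau> = (1 / real b powr \<tau>) ^ (n - k)"
      using one_over_power_powr[of "real b" "n - k" \<tau>] b unfolding h_def by simp
    then show "\<bar>d k\<bar> \<le> E k" "\<bar>d' k\<bar> \<le> E k"
      using hol[of "q k + h k" "q k"] hol[of "q' k + h k" "q' k"] q[of k] q'[of k] h0[of k]
      unfolding d_def d'_def E_def h_def by auto
  qed
  moreover have "0 \<le> ov k l" for k l
    unfolding ov_def by (rule min_overlap_nonneg) (use h0 in auto)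
  moreover have "ov 1 1 = h 1"
    unfolding ov_def q1 using h0[of 1] by (simp add: min_def)
  ultimately have "\<alpha>\<^sup>2 * h 1 - 2 * SE * SH - SE\<^sup>2
      \<le> (\<Sum>k<n. \<Sum>l<n. \<alpha> ^ k * \<alpha> ^ l * (ov k l - d' l * h k - d k * h l + d k * d' l))"
    unfolding SE_def SH_def using weighted_double_sum_ge[of n "\<lambda>k. \<alpha> ^ k" ov h d E d'] n \<alpha> h0
    by auto
  also have "\<dots> = (\<Sum>k<n. \<Sum>l<n. \<alpha> ^ k * \<alpha> ^ l * bridge_increment_cov \<kappa>
        (q k + 1 / real b ^ (n - k)) (q k) (q' l + 1 / real b ^ (n - l)) (q' l))"
    by (simp add: bridge_increment_cov_def ov_def d_def d'_def h_def)
  finally have main: "\<alpha>\<^sup>2 * h 1 - 2 * SE * SH - SE\<^sup>2 \<le> \<dots>" .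
  have "0 < real b" using b by simp
  moreover have "2 * SE * SH + SE\<^sup>2 \<le> (2 * C + C\<^sup>2) * (real n ^ 2 * (\<rho>\<^sup>2 * real b) ^ n) / real b ^ n"
    unfolding SE_def SH_def E_def h_def using error_sums_le[OF \<alpha> \<rho> C] b by simp
  moreover have "\<alpha>\<^sup>2 * h 1 = \<alpha>\<^sup>2 * real b / real b ^ n"
    using n \<open>0 < real b\<close> unfolding h_def by (simp add: power_diff)
  ultimately show ?thesis
    using main by (simp add: diff_divide_distrib)
qed

lemma holder_on01_nonneg_const:
  assumes "holder_on01 \<tau> f"
  obtains C where "0 \<le> C"
    and "\<And>x y. x \<in> {0..1} \<Longrightarrow> y \<in> {0..1} \<Longrightarrow> \<bar>f x - f y\<bar> \<le> C * \<bar>x - y\<bar> powr \<tau>"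
proof -
  obtain C where C: "\<forall>x\<in>{0..1}. \<forall>y\<in>{0..1}. \<bar>f x - f y\<bar> \<le> C * \<bar>x - y\<bar> powr \<tau>"
    using assms unfolding holder_on01_def by blast
  have "\<bar>f x - f y\<bar> \<le> max C 0 * \<bar>x - y\<bar> powr \<tau>" if "x \<in> {0..1}" "y \<in> {0..1}" for x y
    using C that mult_right_mono[of C "max C 0" "\<bar>x - y\<bar> powr \<tau>"] by force
  then show thesis by (intro that[of "max C 0"]) auto
qed

lemma exists_rate_bound:
  fixes \<alpha> \<tau> :: real and b :: nat
  assumes "1/2 < \<tau>" "0 < \<alpha>" "2 \<le> b" "\<alpha>\<^sup>2 * real b < 1"
  obtains \<rho> where "\<alpha> \<le> \<rho>" "1 / real b powr \<tau> \<le> \<rho>" "1 / real b \<le> \<rho>" "\<rho>\<^sup>2 * real b < 1"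
proof -
  define \<beta> where "\<beta> = real b powr \<tau>"
  have b1: "1 < real b" using assms by simp
  have "real b powr 1 < real b powr (2 * \<tau>)"
    using b1 assms by (intro powr_less_mono) auto
  then have "real b < \<beta>\<^sup>2"
    unfolding \<beta>_def using b1 by (simp add: powr_powr[symmetric] powr_power)
  moreover have "0 < \<beta>" unfolding \<beta>_def using b1 by simp
  ultimately have "(1 / \<beta>)\<^sup>2 * real b < 1"
    by (simp add: power_divide field_simps)
  moreover have "(1 / real b)\<^sup>2 * real b < 1"
    using b1 by (simp add: power2_eq_square field_simps)
  moreover have "max \<alpha> (max (1 / \<beta>) (1 / real b)) \<in> {\<alpha>, 1 / \<beta>, 1 / real b}"
    by (simp add: max_def)
  ultimately show thesis
    using assms by (intro that[of "max \<alpha> (max (1 / \<beta>) (1 / real b))"]) (auto simp: \<beta>_def)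
qed

lemma tendsto_square_mult_power_zero:
  fixes \<gamma> :: real
  assumes "0 \<le> \<gamma>" "\<gamma> < 1"
  shows "(\<lambda>n. real n ^ 2 * \<gamma> ^ n) \<longlonglongrightarrow> 0"
proof -
  have "(\<lambda>n. of_nat n * sqrt \<gamma> ^ n) \<longlonglongrightarrow> 0"
    using assms by (intro powser_times_n_limit_0) simp
  then have "(\<lambda>n. (of_nat n * sqrt \<gamma> ^ n)\<^sup>2) \<longlonglongrightarrow> 0"
    using tendsto_power[of _ 0 sequentially 2] by simp
  moreover have "(of_nat n * sqrt \<gamma> ^ n)\<^sup>2 = real n ^ 2 * \<gamma> ^ n" for n
    using assms by (simp add: power_mult_distrib flip: power_mult) (simp add: power_mult mult.commute[of n])
  ultimately show ?thesis by simp
qed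

lemma procX_shifted_increment_cov_ge:
  fixes M :: "'a measure" and W :: "real \<Rightarrow> 'a \<Rightarrow> real" and \<kappa> :: "real \<Rightarrow> real"
    and C \<tau> \<alpha> \<rho> :: real and b n j :: nat
  assumes BM: "std_brownian_motion M W" and \<kappa>: "\<kappa> 0 = 0" "\<kappa> 1 = 1"
    and n: "2 \<le> n" and b: "2 \<le> b" and \<alpha>: "0 < \<alpha>"
    and \<rho>: "\<alpha> \<le> \<rho>" "1 / real b powr \<tau> \<le> \<rho>" "1 / real b \<le> \<rho>"
    and C: "0 \<le> C"
    and hol: "\<And>x y. x \<in> {0..1} \<Longrightarrow> y \<in> {0..1} \<Longrightarrow> \<bar>\<kappa> x - \<kappa> y\<bar> \<le> C * \<bar>x - y\<bar> powr \<tau>"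
    and j: "b ^ (n - 1) \<le> j"
  shows "(\<alpha>\<^sup>2 * real b - (2 * C + C\<^sup>2) * (real n ^ 2 * (\<rho>\<^sup>2 * real b) ^ n)) / real b ^ n
    \<le> (\<integral>\<omega>. (procX \<alpha> b \<kappa> W ((real j + 1) / real b ^ n) \<omega> - procX \<alpha> b \<kappa> W (real j / real b ^ n) \<omega>)
          * (procX \<alpha> b \<kappa> W ((real j + 1) / real b ^ n - 1 / real b) \<omega>
             - procX \<alpha> b \<kappa> W (real j / real b ^ n - 1 / real b) \<omega>) \<partial>M)"
proof -
  define j' where "j' = j - b ^ (n - 1)"
  have "0 < real b" using b by simp
  moreover have "real b ^ n = real b * real b ^ (n - 1)"
    using n by (simp flip: power_Suc)
  ultimately have shift: "real j / real b ^ n - 1 / real b = real j' / real b ^ n"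
      "(real j + 1) / real b ^ n - 1 / real b = (real j' + 1) / real b ^ n"
    using j by (simp_all add: j'_def of_nat_diff field_simps)
  have "residue_frac (b ^ (n - 1)) j = residue_frac (b ^ (n - 1)) j'"
    using j by (simp add: residue_frac_def j'_def le_mod_geq)
  moreover have "1 \<le> b" using b by simp
  ultimately show ?thesis
    unfolding shift procX_grid_increment_cov[OF BM \<open>1 \<le> b\<close> \<kappa>]
    by (intro bridge_cov_double_sum_ge[OF n b \<alpha> \<rho> C hol] residue_frac_interval) auto
qed

theorem lemma3p11:
  fixes M :: "'a measure" and W :: "real \<Rightarrow> 'a \<Rightarrow> real"
    and \<kappa> :: "real \<Rightarrow> real" and \<tau> \<alpha> :: real and b :: nat
  assumes BM: "std_brownian_motion M W"
    and kappa_range: "\<kappa> ` {0..1} \<subseteq> {0..1}"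
    and kappa0: "\<kappa> 0 = 0" and kappa1: "\<kappa> 1 = 1"
    and tau: "\<tau> > 1/2" and hol: "holder_on01 \<tau> \<kappa>"
    and alpha: "0 < \<alpha>" "\<alpha> < 1"
    and b: "b \<ge> 2"
    and ab: "\<alpha>\<^sup>2 * real b < 1"
  shows "\<exists>lam>0. \<exists>Mn::nat. \<forall>n\<ge>Mn. \<forall>j::nat. b ^ (n - 1) \<le> j \<and> j < b ^ n \<longrightarrow>
     (\<integral>\<omega>. (procX \<alpha> b \<kappa> W ((real j + 1) / real b ^ n) \<omega> - procX \<alpha> b \<kappa> W (real j / real b ^ n) \<omega>)
          * (procX \<alpha> b \<kappa> W ((real j + 1) / real b ^ n - 1 / real b) \<omega>
             - procX \<alpha> b \<kappa> W (real j / real b ^ n - 1 / real b) \<omega>) \<partial>M)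
     \<ge> lam / real b ^ n"
proof -
  obtain C where C: "0 \<le> C"
    and hol_C: "\<And>x y. x \<in> {0..1} \<Longrightarrow> y \<in> {0..1} \<Longrightarrow> \<bar>\<kappa> x - \<kappa> y\<bar> \<le> C * \<bar>x - y\<bar> powr \<tau>"
    using holder_on01_nonneg_const[OF hol] by blast
  obtain \<rho> where \<rho>: "\<alpha> \<le> \<rho>" "1 / real b powr \<tau> \<le> \<rho>" "1 / real b \<le> \<rho>"
    and \<rho>_small: "\<rho>\<^sup>2 * real b < 1"
    using exists_rate_bound[OF tau alpha(1) b ab] by blast
  define lam where "lam = \<alpha>\<^sup>2 * real b / 2"
  have "0 < lam" using alpha b by (simp add: lam_def)
  have "(\<lambda>n. (2 * C + C\<^sup>2) * (real n ^ 2 * (\<rho>\<^sup>2 * real b) ^ n)) \<longlonglongrightarrow> (2 * C + C\<^sup>2) * 0"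
    using \<rho>_small by (intro tendsto_mult tendsto_const tendsto_square_mult_power_zero) auto
  then have "\<forall>\<^sub>F n in sequentially. (2 * C + C\<^sup>2) * (real n ^ 2 * (\<rho>\<^sup>2 * real b) ^ n) < lam"
    using \<open>0 < lam\<close> by (simp add: order_tendstoD(2))
  then obtain N0 where N0: "\<And>n. N0 \<le> n \<Longrightarrow> (2 * C + C\<^sup>2) * (real n ^ 2 * (\<rho>\<^sup>2 * real b) ^ n) < lam"
    unfolding eventually_sequentially by blast
  have lam_le: "lam / real b ^ n
      \<le> (\<alpha>\<^sup>2 * real b - (2 * C + C\<^sup>2) * (real n ^ 2 * (\<rho>\<^sup>2 * real b) ^ n)) / real b ^ n"
    if "N0 \<le> n" for n
  proof -
    have "lam \<le> \<alpha>\<^sup>2 * real b - (2 * C + C\<^sup>2) * (real n ^ 2 * (\<rho>\<^sup>2 * real b) ^ n)"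
      using N0[OF that] unfolding lam_def by linarith
    then show ?thesis by (simp add: divide_right_mono)
  qed
  show ?thesis
    by (intro exI[of _ lam] conjI \<open>0 < lam\<close> exI[of _ "max N0 2"] allI impI
        order_trans[OF lam_le procX_shifted_increment_cov_ge[OF BM kappa0 kappa1 _ b alpha(1) \<rho> C hol_C]])
      auto
qed

end
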